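(* Let $A_0\subseteq A$ be a finite extension of $k$-algebras, i.e. $A$ is finitely generated both as a left and as a right $A_0$-module. Then a two-sided ideal $I$ of $A$ has finite $k$-codimension in $A$ if and only if there exists a two-sided ideal $I_0$ of $A_0$ of finite $k$-codimension in $A_0$ such that $I_0\subseteq I$.
   Context: $k$ is a field; algebras are unital associative $k$-algebras. *)

theory Defs
  imports Main "HOL.Vector_Spaces"
begin

definition k_algebra :: "('k::field \<Rightarrow> 'a::ring_1 \<Rightarrow> 'a) \<Rightarrow> bool" where
  "k_algebra scale \<longleftrightarrow> vector_space scale \<and>
     (\<forall>c x y. scale c (x * y) = scale c x * y \<and> scale c (x * y) = x * scale c y)"

definition subalgebra :: "('k::field \<Rightarrow> 'a::ring_1 \<Rightarrow> 'a) \<Rightarrow> 'a set \<Rightarrow> bool" where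
  "subalgebra scale A0 \<longleftrightarrow> 1 \<in> A0 \<and> 0 \<in> A0 \<and>
     (\<forall>x\<in>A0. \<forall>y\<in>A0. x + y \<in> A0 \<and> x * y \<in> A0) \<and>
     (\<forall>c. \<forall>x\<in>A0. scale c x \<in> A0)"

definition fin_gen_left :: "'a::ring_1 set \<Rightarrow> bool" where
  "fin_gen_left A0 \<longleftrightarrow> (\<exists>G. finite G \<and>
     (\<forall>x. \<exists>c. (\<forall>g\<in>G. c g \<in> A0) \<and> x = (\<Sum>g\<in>G. c g * g)))"

definition fin_gen_right :: "'a::ring_1 set \<Rightarrow> bool" where
  "fin_gen_right A0 \<longleftrightarrow> (\<exists>G. finite G \<and>
     (\<forall>x. \<exists>c. (\<forall>g\<in>G. c g \<in> A0) \<and> x = (\<Sum>g\<in>G. g * c g)))"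

text \<open>Two-sided ideal I of the subalgebra B (B = UNIV gives ideals of the whole algebra):
a k-subspace of B closed under multiplication by elements of B on both sides.\<close>
definition two_sided_ideal :: "('k::field \<Rightarrow> 'a::ring_1 \<Rightarrow> 'a) \<Rightarrow> 'a set \<Rightarrow> 'a set \<Rightarrow> bool" where
  "two_sided_ideal scale B I \<longleftrightarrow> I \<subseteq> B \<and> 0 \<in> I \<and>
     (\<forall>x\<in>I. \<forall>y\<in>I. x + y \<in> I) \<and> (\<forall>c. \<forall>x\<in>I. scale c x \<in> I) \<and>
     (\<forall>a\<in>B. \<forall>x\<in>I. a * x \<in> I \<and> x * a \<in> I)"

text \<open>I has finite k-codimension in B, i.e. B/I is a finite-dimensional k-vector space:
B is spanned modulo I by finitely many elements of B.\<close>
definition finite_codim :: "('k::field \<Rightarrow> 'a::ring_1 \<Rightarrow> 'a) \<Rightarrow> 'a set \<Rightarrow> 'a set \<Rightarrow> bool" where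
  "finite_codim scale B I \<longleftrightarrow> (\<exists>F. finite F \<and> F \<subseteq> B \<and>
     (\<forall>b\<in>B. \<exists>u\<in>module.span scale F. \<exists>i\<in>I. b = u + i))"

end

theory Submission
  imports Defs
begin

text \<open>If A = A0 g_1 + ... + A0 g_n and A0 = span F + I0, then A = span {f g_j} + I0 g_1 + ... + I0 g_n,
and I0 g_j \<subseteq> I because I is a right ideal of A; so only finite generation as a left A0-module
is needed. Conversely, A0 / (I \<inter> A0) embeds into the finite-dimensional space A / I, so
I \<inter> A0 is an ideal of A0 of finite codimension contained in I.\<close>

lemma (in vector_space) finite_spanning_subset:
  assumes "finite F" "W \<subseteq> span F"
  obtains B where "finite B" "B \<subseteq> W" "W \<subseteq> span B"
proof -
  obtain B where B: "B \<subseteq> W" "independent B" "W \<subseteq> span B"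
    using maximal_independent_subset by blast
  have "finite B"
    using independent_span_bound[OF assms(1) B(2)] B(1) assms(2) by blast
  with B show thesis using that by blast
qed

lemma (in vector_space) span_image_congruent:
  assumes "subspace S" "\<And>b. b \<in> B \<Longrightarrow> f b - b \<in> S" "x \<in> span B"
  shows "\<exists>y\<in>span (f ` B). y - x \<in> S"
  using assms(3)
proof (induction rule: span_induct_alt)
  case base
  then show ?case using span_zero subspace_0[OF assms(1)] by force
next
  case (step c b x)
  then obtain y where y: "y \<in> span (f ` B)" "y - x \<in> S" by blast
  have "scale c (f b) + y \<in> span (f ` B)"
    using step(1) y(1) by (intro span_add[OF span_scale[OF span_base]]) auto
  moreover have "scale c (f b) + y - (scale c b + x) = scale c (f b - b) + (y - x)"
    by (simp add: scale_right_diff_distrib algebra_simps)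
  moreover have "scale c (f b - b) + (y - x) \<in> S"
    using assms(1) assms(2)[OF step(1)] y(2) by (simp add: subspace_add subspace_scale)
  ultimately show ?case by metis
qed

lemma (in vector_space) finite_codim_subspace_Int:
  assumes U: "subspace U" and S: "subspace S" and "finite F"
    and cover: "\<And>x. x \<in> U \<Longrightarrow> \<exists>u\<in>span F. \<exists>s\<in>S. x = u + s"
  shows "\<exists>F0. finite F0 \<and> F0 \<subseteq> U \<and> (\<forall>x\<in>U. \<exists>u\<in>span F0. \<exists>s\<in>S \<inter> U. x = u + s)"
proof -
  \<comment> \<open>W, the part of span F meeting U modulo S, is finite-dimensional; lifting a finite
    spanning set of W back into U spans U modulo S.\<close>
  define W where "W = {u \<in> span F. \<exists>x\<in>U. x - u \<in> S}"
  have "W \<subseteq> span F" unfolding W_def by blast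
  then obtain B where B: "finite B" "B \<subseteq> W" "W \<subseteq> span B"
    using finite_spanning_subset[OF \<open>finite F\<close>] by blast
  have "\<forall>b\<in>B. \<exists>x\<in>U. x - b \<in> S" using B(2) unfolding W_def by blast
  then obtain lift where lift: "\<And>b. b \<in> B \<Longrightarrow> lift b \<in> U \<and> lift b - b \<in> S"
    by metis
  have span_lift: "span (lift ` B) \<subseteq> U"
    using lift by (intro span_minimal U) blast
  have "\<exists>y\<in>span (lift ` B). \<exists>s\<in>S \<inter> U. x = y + s" if x: "x \<in> U" for x
  proof -
    obtain u s where us: "u \<in> span F" "s \<in> S" "x = u + s"
      using cover[OF x] by blast
    have "x - u \<in> S" using us by simp
    then have "u \<in> W" unfolding W_def using us(1) x by blast
    then obtain y where y: "y \<in> span (lift ` B)" "y - u \<in> S"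
      using span_image_congruent[OF S, of B lift] lift B(3) by blast
    have "x - y = s - (y - u)" using us(3) by (simp add: algebra_simps)
    then have "x - y \<in> S" using subspace_diff[OF S us(2) y(2)] by (simp only:)
    moreover have "x - y \<in> U" using subspace_diff[OF U x] y(1) span_lift by blast
    ultimately have "x - y \<in> S \<inter> U" by blast
    then show ?thesis using y(1) by (intro bexI[of _ y] bexI[of _ "x - y"]) simp_all
  qed
  moreover have "finite (lift ` B)" "lift ` B \<subseteq> U" using B(1) lift by auto
  ultimately show ?thesis by blast
qed

lemma k_algebra_linear_mult_right:
  assumes "k_algebra scale"
  shows "Vector_Spaces.linear scale scale (\<lambda>x. x * a)"
  unfolding linear_iff using assms by (auto simp: k_algebra_def distrib_right)

lemma finite_codim_UNIV_if_fin_gen_left: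
  fixes scale :: "'k::field \<Rightarrow> 'a::ring_1 \<Rightarrow> 'a"
  assumes alg: "k_algebra scale" and "fin_gen_left A0"
    and "finite_codim scale A0 I0" and "I0 \<subseteq> I"
    and I: "module.subspace scale I" and right_ideal: "\<And>x a. x \<in> I \<Longrightarrow> x * a \<in> I"
  shows "finite_codim scale UNIV I"
proof -
  interpret vector_space scale using alg by (simp add: k_algebra_def)
  obtain G where G: "finite G" "\<And>x. \<exists>c. (\<forall>g\<in>G. c g \<in> A0) \<and> x = (\<Sum>g\<in>G. c g * g)"
    using assms(2) by (auto simp: fin_gen_left_def)
  obtain F where F: "finite F" "\<And>a. a \<in> A0 \<Longrightarrow> \<exists>u\<in>span F. \<exists>i\<in>I0. a = u + i"
    using assms(3) by (auto simp: finite_codim_def)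
  define H where "H = (\<lambda>(f, g). f * g) ` (F \<times> G)"
  define M where "M = {u + i |u i. u \<in> span H \<and> i \<in> I}"
  have M: "subspace M"
    unfolding M_def by (intro subspace_sums subspace_span I)
  have mult_gen: "a * g \<in> M" if "a \<in> A0" "g \<in> G" for a g
  proof -
    obtain u i where ui: "u \<in> span F" "i \<in> I0" "a = u + i" using F(2) \<open>a \<in> A0\<close> by blast
    interpret mult_right: Vector_Spaces.linear scale scale "\<lambda>x. x * g"
      using k_algebra_linear_mult_right[OF alg] .
    have "u * g \<in> span ((\<lambda>x. x * g) ` F)"
      using mult_right.span_image ui(1) by blast
    also have "\<dots> \<subseteq> span H"
      using \<open>g \<in> G\<close> by (intro span_mono) (auto simp: H_def)
    finally have "u * g \<in> span H" .
    moreover have "i * g \<in> I" using ui(2) \<open>I0 \<subseteq> I\<close> right_ideal by blast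
    moreover have "a * g = u * g + i * g" using ui(3) by (simp add: distrib_right)
    ultimately show ?thesis unfolding M_def by blast
  qed
  have "\<exists>u\<in>span H. \<exists>i\<in>I. x = u + i" for x
  proof -
    obtain c where c: "\<forall>g\<in>G. c g \<in> A0" "x = (\<Sum>g\<in>G. c g * g)" using G(2) by blast
    have "(\<Sum>g\<in>G. c g * g) \<in> M" using c(1) by (intro subspace_sum[OF M] mult_gen) auto
    then show ?thesis using c(2) unfolding M_def by blast
  qed
  moreover have "finite H" using F(1) G(1) by (simp add: H_def)
  ultimately show ?thesis unfolding finite_codim_def by blast
qed

theorem lemma4p1:
  fixes scale :: "'k::field \<Rightarrow> 'a::ring_1 \<Rightarrow> 'a"
    and A0 :: "'a set" and I :: "'a set"
  assumes "k_algebra scale"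
    and "subalgebra scale A0"
    and "fin_gen_left A0" and "fin_gen_right A0"
    and "two_sided_ideal scale UNIV I"
  shows "finite_codim scale UNIV I \<longleftrightarrow>
    (\<exists>I0. two_sided_ideal scale A0 I0 \<and> finite_codim scale A0 I0 \<and> I0 \<subseteq> I)"
proof -
  interpret vector_space scale using assms(1) by (simp add: k_algebra_def)
  have I: "subspace I" using assms(5) by (simp add: two_sided_ideal_def subspace_def)
  have A0: "subspace A0" using assms(2) by (simp add: subalgebra_def subspace_def)
  show ?thesis
  proof
    assume "finite_codim scale UNIV I"
    then have "finite_codim scale A0 (I \<inter> A0)"
      using finite_codim_subspace_Int[OF A0 I] by (auto simp: finite_codim_def)
    moreover have "two_sided_ideal scale A0 (I \<inter> A0)"
      using assms(2,5) by (auto simp: two_sided_ideal_def subalgebra_def)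
    ultimately show "\<exists>I0. two_sided_ideal scale A0 I0 \<and> finite_codim scale A0 I0 \<and> I0 \<subseteq> I"
      by blast
  next
    assume "\<exists>I0. two_sided_ideal scale A0 I0 \<and> finite_codim scale A0 I0 \<and> I0 \<subseteq> I"
    then obtain I0 where "finite_codim scale A0 I0" "I0 \<subseteq> I" by blast
    moreover have "\<And>x a. x \<in> I \<Longrightarrow> x * a \<in> I"
      using assms(5) by (simp add: two_sided_ideal_def)
    ultimately show "finite_codim scale UNIV I"
      using finite_codim_UNIV_if_fin_gen_left[OF assms(1,3) _ _ I] by blast
  qed
qed

end
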